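(* Let $A\subseteq B$ be commutative semirings ($A$ a subsemiring of $B$), let $S=A[x_1,\dots,x_n]$, and let $\rho$ be a prime congruence on $B$. Call a subset $Y\subseteq B^n$ a $\rho$-algebraic variety (over $A$) if $Y=Z_\rho(T)(B)$ for some non-empty $T\subseteq S\times S$. Then: (1) the union of two $\rho$-algebraic varieties is a $\rho$-algebraic variety; (2) the intersection of any family of $\rho$-algebraic varieties is a $\rho$-algebraic variety; (3) $\emptyset$ and $B^n$ are $\rho$-algebraic varieties.
   Context: A (commutative) semiring is a set with operations $+,\cdot$ such that $(A,+)$ is a commutative monoid with identity $0$, $(A,\cdot)$ a commutative monoid with identity $1\neq0$, multiplication distributes over addition and $0a=0$. A congruence on a semiring $B$ is an equivalence relation $\rho\subseteq B\times B$ with $(a,b),(c,d)\in\rho\Rightarrow(a+c,b+d),(ac,bd)\in\rho$. The twisted product is $(a,b)\ast(c,d)=(ac+bd,ad+bc)$; a congruence $\rho\neq B\times B$ is prime if $(a,b)\ast(c,d)\in\rho$ implies $(a,b)\in\rho$ or $(c,d)\in\rho$. $S=A[x_1,\dots,x_n]$ is the polynomial semiring over $A$; for $P\in B^n$ and $f\in S$, $f(P)\in B$ is the evaluation. For non-empty $T\subseteq S\times S$, $Z_\rho(T)(B)=\{P\in B^n:\ (f(P),g(P))\in\rho\ \text{for all}\ (f,g)\in T\}$. *)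

theory Defs
  imports "HOL-Library.Poly_Mapping"
begin

text \<open>The semiring B is the type 'b (class comm_semiring_1, which includes 0 \<noteq> 1);
 the subsemiring A is a subset of it.\<close>

definition subsemiring :: "'b::comm_semiring_1 set \<Rightarrow> bool" where
  "subsemiring A \<longleftrightarrow> 0 \<in> A \<and> 1 \<in> A \<and> (\<forall>a\<in>A. \<forall>b\<in>A. a + b \<in> A \<and> a * b \<in> A)"

definition semiring_congruence :: "('b::comm_semiring_1 \<times> 'b) set \<Rightarrow> bool" where
  "semiring_congruence \<rho> \<longleftrightarrow> equiv UNIV \<rho> \<and>
     (\<forall>a b c d. (a, b) \<in> \<rho> \<longrightarrow> (c, d) \<in> \<rho> \<longrightarrow> (a + c, b + d) \<in> \<rho> \<and> (a * c, b * d) \<in> \<rho>)"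

definition twisted_prod :: "'b::comm_semiring_1 \<times> 'b \<Rightarrow> 'b \<times> 'b \<Rightarrow> 'b \<times> 'b" where
  "twisted_prod p q = (fst p * fst q + snd p * snd q, fst p * snd q + snd p * fst q)"

definition prime_congruence :: "('b::comm_semiring_1 \<times> 'b) set \<Rightarrow> bool" where
  "prime_congruence \<rho> \<longleftrightarrow> semiring_congruence \<rho> \<and> \<rho> \<noteq> UNIV \<and>
     (\<forall>p q. twisted_prod p q \<in> \<rho> \<longrightarrow> p \<in> \<rho> \<or> q \<in> \<rho>)"

text \<open>Polynomials in variables x_0,...,x_(n-1): finitely supported maps from monomials
 (finitely supported exponent vectors) to coefficients.\<close>

type_synonym 'b mpoly = "(nat \<Rightarrow>\<^sub>0 nat) \<Rightarrow>\<^sub>0 'b"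

definition polys :: "'b::comm_semiring_1 set \<Rightarrow> nat \<Rightarrow> 'b mpoly set" where
  "polys A n = {f::(nat \<Rightarrow>\<^sub>0 nat) \<Rightarrow>\<^sub>0 'b. \<forall>m \<in> Poly_Mapping.keys f. Poly_Mapping.lookup f m \<in> A \<and> Poly_Mapping.keys m \<subseteq> {..<n}}"

text \<open>Points of B^n: functions nat \<Rightarrow> 'b vanishing outside {..<n}.\<close>
definition points :: "nat \<Rightarrow> (nat \<Rightarrow> 'b::comm_semiring_1) set" where
  "points n = {P. \<forall>i\<ge>n. P i = 0}"

definition eval_poly :: "'b::comm_semiring_1 mpoly \<Rightarrow> (nat \<Rightarrow> 'b) \<Rightarrow> 'b" where
  "eval_poly f P = (\<Sum>m\<in>Poly_Mapping.keys f. Poly_Mapping.lookup f m * (\<Prod>i\<in>Poly_Mapping.keys m. P i ^ Poly_Mapping.lookup m i))"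

definition Z_rho :: "('b::comm_semiring_1 \<times> 'b) set \<Rightarrow> nat \<Rightarrow> ('b mpoly \<times> 'b mpoly) set \<Rightarrow> (nat \<Rightarrow> 'b) set" where
  "Z_rho \<rho> n T = {P \<in> points n. \<forall>(f, g) \<in> T. (eval_poly f P, eval_poly g P) \<in> \<rho>}"

definition rho_variety :: "'b::comm_semiring_1 set \<Rightarrow> ('b \<times> 'b) set \<Rightarrow> nat \<Rightarrow> (nat \<Rightarrow> 'b) set \<Rightarrow> bool" where
  "rho_variety A \<rho> n Y \<longleftrightarrow> (\<exists>T. T \<noteq> {} \<and> T \<subseteq> polys A n \<times> polys A n \<and> Y = Z_rho \<rho> n T)"

end

theory Submission
  imports Defs
begin

text \<open>Evaluation at a point is a semiring homomorphism, so the twisted product of two pairs of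
  polynomials evaluates to the twisted product of their values. For a prime congruence the
  zero set of all twisted products of a pair from T1 with a pair from T2 is therefore
  exactly the union of the zero sets of T1 and T2. Intersections are zero sets of unions of
  the defining sets, the whole space is the zero set of (0,0), and the empty set is the zero
  set of (1,0), since (1,0) lies in no proper congruence.\<close>

definition monomial_value :: "(nat \<Rightarrow> 'b::comm_semiring_1) \<Rightarrow> (nat \<Rightarrow>\<^sub>0 nat) \<Rightarrow> 'b" where
  "monomial_value P m = (\<Prod>i\<in>Poly_Mapping.keys m. P i ^ Poly_Mapping.lookup m i)"

lemma monomial_value_superset:
  assumes "finite K" and "Poly_Mapping.keys m \<subseteq> K"
  shows "monomial_value P m = (\<Prod>i\<in>K. P i ^ Poly_Mapping.lookup m i)"
  unfolding monomial_value_def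
  using assms by (intro prod.mono_neutral_left) (auto simp: in_keys_iff)

lemma monomial_value_add: "monomial_value P (a + b) = monomial_value P a * monomial_value P b"
proof -
  let ?K = "Poly_Mapping.keys a \<union> Poly_Mapping.keys b"
  have "monomial_value P (a + b) = (\<Prod>i\<in>?K. P i ^ Poly_Mapping.lookup (a + b) i)"
    by (rule monomial_value_superset) (auto simp: keys_add)
  also have "\<dots> = (\<Prod>i\<in>?K. P i ^ Poly_Mapping.lookup a i) * (\<Prod>i\<in>?K. P i ^ Poly_Mapping.lookup b i)"
    by (simp add: lookup_add power_add prod.distrib)
  also have "\<dots> = monomial_value P a * monomial_value P b"
    using monomial_value_superset[of ?K a P] monomial_value_superset[of ?K b P] by simp
  finally show ?thesis .
qed

lemma eval_poly_conv_monomial_value: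
  "eval_poly f P = (\<Sum>m\<in>Poly_Mapping.keys f. Poly_Mapping.lookup f m * monomial_value P m)"
  unfolding eval_poly_def monomial_value_def ..

lemma eval_poly_zero [simp]: "eval_poly 0 P = 0"
  by (simp add: eval_poly_def)

lemma eval_poly_single [simp]: "eval_poly (Poly_Mapping.single m c) P = c * monomial_value P m"
  by (simp add: eval_poly_conv_monomial_value)

lemma eval_poly_one [simp]: "eval_poly 1 P = 1"
  by (simp flip: single_one add: monomial_value_def)

lemma eval_poly_add [simp]: "eval_poly (f + g) P = eval_poly f P + eval_poly g P"
  unfolding eval_poly_conv_monomial_value
  by (rule setsum_keys_plus_distrib) (auto simp: distrib_right)

lemma eval_poly_sum: "eval_poly (sum F S) P = (\<Sum>x\<in>S. eval_poly (F x) P)"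
  by (induction S rule: infinite_finite_induct) auto

lemma poly_mapping_sum_single: "f = (\<Sum>m\<in>Poly_Mapping.keys f. Poly_Mapping.single m (Poly_Mapping.lookup f m))"
  by (rule poly_mapping_eqI) (simp add: lookup_sum lookup_single when_def in_keys_iff sum.delta')

lemma mult_conv_sum_single:
  "f * g = (\<Sum>a\<in>Poly_Mapping.keys f. \<Sum>b\<in>Poly_Mapping.keys g.
     Poly_Mapping.single (a + b) (Poly_Mapping.lookup f a * Poly_Mapping.lookup g b))"
  by (subst poly_mapping_sum_single[of f], subst poly_mapping_sum_single[of g])
    (simp add: sum_product mult_single)

lemma eval_poly_mult [simp]: "eval_poly (f * g) P = eval_poly f P * eval_poly g P"
proof -
  have "eval_poly (f * g) P = (\<Sum>a\<in>Poly_Mapping.keys f. \<Sum>b\<in>Poly_Mapping.keys g.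
      Poly_Mapping.lookup f a * Poly_Mapping.lookup g b * monomial_value P (a + b))"
    by (simp add: mult_conv_sum_single eval_poly_sum)
  also have "\<dots> = eval_poly f P * eval_poly g P"
    by (simp add: eval_poly_conv_monomial_value monomial_value_add sum_product ac_simps)
  finally show ?thesis .
qed

lemma eval_poly_twisted_prod:
  "map_prod (\<lambda>f. eval_poly f P) (\<lambda>f. eval_poly f P) (twisted_prod p q) =
   twisted_prod (map_prod (\<lambda>f. eval_poly f P) (\<lambda>f. eval_poly f P) p)
     (map_prod (\<lambda>f. eval_poly f P) (\<lambda>f. eval_poly f P) q)"
  by (simp add: twisted_prod_def map_prod_def split_beta)

lemma polys_single:
  assumes "c \<in> A" and "Poly_Mapping.keys m \<subseteq> {..<n}"
  shows "Poly_Mapping.single m c \<in> polys A n"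
  using assms by (simp add: polys_def)

lemma zero_in_polys: "0 \<in> polys A n"
  by (simp add: polys_def)

lemma one_in_polys: "subsemiring A \<Longrightarrow> 1 \<in> polys A n"
  using polys_single[of 1 A 0 n] by (simp add: subsemiring_def)

lemma add_in_polys:
  assumes A: "subsemiring A" and "f \<in> polys A n" and "g \<in> polys A n"
  shows "f + g \<in> polys A n"
proof -
  have "0 \<in> A" using A by (simp add: subsemiring_def)
  then have coeffs: "Poly_Mapping.lookup h m \<in> A" if "h \<in> polys A n" for h m
    using that by (cases "m \<in> Poly_Mapping.keys h") (auto simp: polys_def in_keys_iff)
  have "Poly_Mapping.lookup (f + g) m \<in> A" for m
    using A coeffs assms by (simp add: lookup_add subsemiring_def)
  moreover have "Poly_Mapping.keys m \<subseteq> {..<n}" if "m \<in> Poly_Mapping.keys (f + g)" for m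
    using that assms keys_add[of f g] by (auto simp: polys_def)
  ultimately show ?thesis
    by (simp add: polys_def)
qed

lemma sum_in_polys:
  "subsemiring A \<Longrightarrow> (\<And>x. x \<in> S \<Longrightarrow> F x \<in> polys A n) \<Longrightarrow> sum F S \<in> polys A n"
  by (induction S rule: infinite_finite_induct) (auto simp: zero_in_polys add_in_polys)

lemma mult_in_polys:
  assumes A: "subsemiring A" and f: "f \<in> polys A n" and g: "g \<in> polys A n"
  shows "f * g \<in> polys A n"
  unfolding mult_conv_sum_single
proof (intro sum_in_polys[OF A] polys_single)
  fix a b assume a: "a \<in> Poly_Mapping.keys f" and b: "b \<in> Poly_Mapping.keys g"
  show "Poly_Mapping.lookup f a * Poly_Mapping.lookup g b \<in> A"
    using a b f g A by (simp add: polys_def subsemiring_def)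
  show "Poly_Mapping.keys (a + b) \<subseteq> {..<n}"
    using a b f g keys_add[of a b] unfolding polys_def by blast
qed

definition twisted_prods :: "('a::comm_semiring_1 \<times> 'a) set \<Rightarrow> ('a \<times> 'a) set \<Rightarrow> ('a \<times> 'a) set" where
  "twisted_prods T1 T2 = case_prod twisted_prod ` (T1 \<times> T2)"

lemma twisted_prods_in_polys:
  assumes A: "subsemiring A"
    and "T1 \<subseteq> polys A n \<times> polys A n" and "T2 \<subseteq> polys A n \<times> polys A n"
  shows "twisted_prods T1 T2 \<subseteq> polys A n \<times> polys A n"
proof
  fix t assume "t \<in> twisted_prods T1 T2"
  then obtain f1 g1 f2 g2 where "t = twisted_prod (f1, g1) (f2, g2)"
    and "(f1, g1) \<in> T1" and "(f2, g2) \<in> T2"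
    by (auto simp: twisted_prods_def)
  with assms show "t \<in> polys A n \<times> polys A n"
    by (auto simp: twisted_prod_def intro!: add_in_polys[OF A] mult_in_polys[OF A])
qed

lemma twisted_prod_commute: "twisted_prod p q = twisted_prod q p"
  by (simp add: twisted_prod_def ac_simps)

lemma semiring_congruence_twisted_prod:
  assumes \<rho>: "semiring_congruence \<rho>" and p: "p \<in> \<rho>"
  shows "twisted_prod p q \<in> \<rho>"
proof -
  obtain a b c d where pq: "p = (a, b)" "q = (c, d)" by fastforce
  have compatible: "\<And>a b c d. (a, b) \<in> \<rho> \<Longrightarrow> (c, d) \<in> \<rho> \<Longrightarrow> (a + c, b + d) \<in> \<rho> \<and> (a * c, b * d) \<in> \<rho>"
    and refl: "\<And>x. (x, x) \<in> \<rho>" and sym: "\<And>x y. (x, y) \<in> \<rho> \<Longrightarrow> (y, x) \<in> \<rho>"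
    using \<rho> unfolding semiring_congruence_def equiv_def refl_on_def sym_def by blast+
  have "(a * c, b * c) \<in> \<rho>" and "(b * d, a * d) \<in> \<rho>"
    using compatible p pq refl sym by blast+
  then have "(a * c + b * d, b * c + a * d) \<in> \<rho>"
    using compatible by blast
  then show ?thesis
    by (simp add: pq twisted_prod_def add.commute)
qed

lemma one_zero_notin_congruence:
  assumes \<rho>: "semiring_congruence \<rho>" and proper: "\<rho> \<noteq> UNIV"
  shows "(1, 0) \<notin> \<rho>"
proof
  assume one_zero: "(1, 0) \<in> \<rho>"
  have mult: "\<And>a b c d. (a, b) \<in> \<rho> \<Longrightarrow> (c, d) \<in> \<rho> \<Longrightarrow> (a * c, b * d) \<in> \<rho>"
    and refl: "\<And>x. (x, x) \<in> \<rho>" and sym: "\<And>x y. (x, y) \<in> \<rho> \<Longrightarrow> (y, x) \<in> \<rho>"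
    and trans: "\<And>x y z. (x, y) \<in> \<rho> \<Longrightarrow> (y, z) \<in> \<rho> \<Longrightarrow> (x, z) \<in> \<rho>"
    using \<rho> unfolding semiring_congruence_def equiv_def refl_on_def sym_def trans_def by blast+
  have "(a, 0) \<in> \<rho>" for a
    using mult[OF refl one_zero, of a] by simp
  then have "(a, b) \<in> \<rho>" for a b
    using trans[of a 0 b] sym[of b 0] by blast
  with proper show False by auto
qed

lemma Z_rho_iff:
  "P \<in> Z_rho \<rho> n T \<longleftrightarrow>
     P \<in> points n \<and> (\<forall>p\<in>T. map_prod (\<lambda>f. eval_poly f P) (\<lambda>f. eval_poly f P) p \<in> \<rho>)"
  by (auto simp: Z_rho_def)

lemma Z_rho_UN: "Z_rho \<rho> n (\<Union>i\<in>I. T i) = points n \<inter> (\<Inter>i\<in>I. Z_rho \<rho> n (T i))"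
  by (auto simp: Z_rho_def)

lemma Z_rho_zero_zero: "semiring_congruence \<rho> \<Longrightarrow> Z_rho \<rho> n {(0, 0)} = points n"
  by (auto simp: Z_rho_def semiring_congruence_def equiv_def refl_on_def)

lemma Z_rho_one_zero: "semiring_congruence \<rho> \<Longrightarrow> \<rho> \<noteq> UNIV \<Longrightarrow> Z_rho \<rho> n {(1, 0)} = {}"
  using one_zero_notin_congruence by (auto simp: Z_rho_def)

lemma Z_rho_twisted_prods:
  assumes "prime_congruence \<rho>"
  shows "Z_rho \<rho> n (twisted_prods T1 T2) = Z_rho \<rho> n T1 \<union> Z_rho \<rho> n T2"
proof -
  have \<rho>: "semiring_congruence \<rho>"
    and prime: "\<And>p q. twisted_prod p q \<in> \<rho> \<Longrightarrow> p \<in> \<rho> \<or> q \<in> \<rho>"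
    using assms unfolding prime_congruence_def by blast+
  have "(\<forall>p\<in>T1. \<forall>q\<in>T2. twisted_prod (e p) (e q) \<in> \<rho>) \<longleftrightarrow> (\<forall>p\<in>T1. e p \<in> \<rho>) \<or> (\<forall>q\<in>T2. e q \<in> \<rho>)"
    for e :: "'a mpoly \<times> 'a mpoly \<Rightarrow> 'a \<times> 'a"
    using prime semiring_congruence_twisted_prod[OF \<rho>] twisted_prod_commute by metis
  then show ?thesis
    by (auto simp: Z_rho_iff twisted_prods_def eval_poly_twisted_prod)
qed

lemma rho_variety_points:
  "semiring_congruence \<rho> \<Longrightarrow> rho_variety A \<rho> n (points n)"
  unfolding rho_variety_def
  by (intro exI[of _ "{(0, 0)}"]) (simp add: Z_rho_zero_zero zero_in_polys)

lemma rho_variety_empty: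
  "subsemiring A \<Longrightarrow> semiring_congruence \<rho> \<Longrightarrow> \<rho> \<noteq> UNIV \<Longrightarrow> rho_variety A \<rho> n {}"
  unfolding rho_variety_def
  by (intro exI[of _ "{(1, 0)}"]) (simp add: Z_rho_one_zero zero_in_polys one_in_polys)

lemma rho_variety_Inter:
  assumes "semiring_congruence \<rho>" and "\<forall>Y\<in>F. rho_variety A \<rho> n Y"
  shows "rho_variety A \<rho> n (points n \<inter> \<Inter> F)"
proof (cases "F = {}")
  case True
  then show ?thesis using assms rho_variety_points by simp
next
  case False
  obtain T where T: "\<forall>Y\<in>F. T Y \<noteq> {} \<and> T Y \<subseteq> polys A n \<times> polys A n \<and> Y = Z_rho \<rho> n (T Y)"
    using assms(2) unfolding rho_variety_def by metis
  then have "points n \<inter> \<Inter> F = Z_rho \<rho> n (\<Union>Y\<in>F. T Y)"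
    by (auto simp: Z_rho_UN)
  moreover have "(\<Union>Y\<in>F. T Y) \<noteq> {}" and "(\<Union>Y\<in>F. T Y) \<subseteq> polys A n \<times> polys A n"
    using T False by auto
  ultimately show ?thesis
    unfolding rho_variety_def by blast
qed

lemma rho_variety_Un:
  assumes A: "subsemiring A" and \<rho>: "prime_congruence \<rho>"
    and "rho_variety A \<rho> n Y1" and "rho_variety A \<rho> n Y2"
  shows "rho_variety A \<rho> n (Y1 \<union> Y2)"
proof -
  obtain T1 T2 where T1: "T1 \<noteq> {}" "T1 \<subseteq> polys A n \<times> polys A n" "Y1 = Z_rho \<rho> n T1"
    and T2: "T2 \<noteq> {}" "T2 \<subseteq> polys A n \<times> polys A n" "Y2 = Z_rho \<rho> n T2"
    using assms(3,4) unfolding rho_variety_def by blast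
  have "twisted_prods T1 T2 \<noteq> {}"
    using T1 T2 by (simp add: twisted_prods_def)
  moreover have "twisted_prods T1 T2 \<subseteq> polys A n \<times> polys A n"
    using T1 T2 by (simp add: twisted_prods_in_polys[OF A])
  moreover have "Y1 \<union> Y2 = Z_rho \<rho> n (twisted_prods T1 T2)"
    using T1 T2 by (simp add: Z_rho_twisted_prods[OF \<rho>])
  ultimately show ?thesis
    unfolding rho_variety_def by blast
qed

theorem theorem3p4:
  fixes A :: "'b::comm_semiring_1 set" and \<rho> :: "('b \<times> 'b) set" and n :: nat
  assumes "subsemiring A" and "prime_congruence \<rho>"
  shows "(\<forall>Y1 Y2. rho_variety A \<rho> n Y1 \<longrightarrow> rho_variety A \<rho> n Y2 \<longrightarrow> rho_variety A \<rho> n (Y1 \<union> Y2))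
    \<and> (\<forall>F. (\<forall>Y\<in>F. rho_variety A \<rho> n Y) \<longrightarrow> rho_variety A \<rho> n (points n \<inter> \<Inter> F))
    \<and> rho_variety A \<rho> n {}
    \<and> rho_variety A \<rho> n (points n)"
proof -
  have congruence: "semiring_congruence \<rho>" and proper: "\<rho> \<noteq> UNIV"
    using assms(2) unfolding prime_congruence_def by blast+
  show ?thesis
    using rho_variety_Un[OF assms] rho_variety_Inter[OF congruence]
      rho_variety_empty[OF assms(1) congruence proper] rho_variety_points[OF congruence]
    by blast
qed

end
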